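(* Let $(\Omega,\mathcal{F})$ be a measurable space, $T:\Omega\to\Omega$ measurable, and $V$ a $T$-invariant upper probability. The following are equivalent: (i) $V$ is ergodic; (ii) there exists $Q\in\operatorname{core}(V)\cap\mathcal{M}^e(T)$ such that for every $P\in\operatorname{core}(V)$, $\lim_{n\to\infty}\frac{1}{n}\sum_{i=0}^{n-1}P(B\cap T^{-i}C)=P(B)Q(C)$ for all $B,C\in\mathcal{F}$; (iii) there exists $Q\in\operatorname{core}(V)\cap\mathcal{M}(T)$ such that for every $P\in\operatorname{core}(V)$, $\lim_{n\to\infty}\frac{1}{n}\sum_{i=0}^{n-1}P(B\cap T^{-i}C)=P(B)Q(C)$ for all $B,C\in\mathcal{F}$.
   Context: A capacity is a monotone map $\mu:\mathcal{F}\to[0,1]$ with $\mu(\emptyset)=0,\mu(\Omega)=1$. An upper probability is a capacity $V$ with $V(A)=\max_{P\in\Lambda}P(A)$ for a weak* (setwise convergence) compact set $\Lambda$ of probabilities; $\operatorname{core}(V)$ is the set of finitely additive normalized $P\le V$ (these are probabilities). $V$ is $T$-invariant if $V(T^{-1}A)=V(A)$; $\mathcal{I}=\{A:T^{-1}A=A\}$; $V$ is ergodic if for each $B\in\mathcal{I}$, $V(B)\in\{0,1\}$ and ($V(B)=0$ or $V(B^c)=0$). $\mathcal{M}(T)$: $T$-invariant probabilities; $\mathcal{M}^e(T)$: those with $P(\mathcal{I})\subset\{0,1\}$. *)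

theory Defs
  imports "HOL-Analysis.Analysis"
begin

text \<open>Set functions on a measurable space M are modelled as functions of type
  'a set => real, normalised to be 0 outside sets M.  The space of such functions
  carries the product topology (instance in Function_Topology), i.e. the topology of
  setwise convergence.\<close>

definition fa_prob :: "'a measure \<Rightarrow> ('a set \<Rightarrow> real) \<Rightarrow> bool" where
  "fa_prob M P \<longleftrightarrow>
     (\<forall>A. A \<notin> sets M \<longrightarrow> P A = 0) \<and>
     (\<forall>A\<in>sets M. 0 \<le> P A) \<and> P (space M) = 1 \<and>
     (\<forall>A\<in>sets M. \<forall>B\<in>sets M. A \<inter> B = {} \<longrightarrow> P (A \<union> B) = P A + P B)"

definition is_prob :: "'a measure \<Rightarrow> ('a set \<Rightarrow> real) \<Rightarrow> bool" where
  "is_prob M P \<longleftrightarrow>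
     (\<forall>A. A \<notin> sets M \<longrightarrow> P A = 0) \<and>
     (\<forall>A\<in>sets M. 0 \<le> P A) \<and> P (space M) = 1 \<and>
     (\<forall>F::nat \<Rightarrow> 'a set. range F \<subseteq> sets M \<longrightarrow> disjoint_family F \<longrightarrow>
        (\<lambda>n. P (F n)) sums P (\<Union>n. F n))"

definition upper_prob :: "'a measure \<Rightarrow> ('a set \<Rightarrow> real) \<Rightarrow> bool" where
  "upper_prob M V \<longleftrightarrow>
     (\<exists>\<Lambda>. \<Lambda> \<noteq> {} \<and> compact \<Lambda> \<and> (\<forall>P\<in>\<Lambda>. is_prob M P) \<and>
        (\<forall>A\<in>sets M. (\<exists>P\<in>\<Lambda>. P A = V A) \<and> (\<forall>P\<in>\<Lambda>. P A \<le> V A)))"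

definition core :: "'a measure \<Rightarrow> ('a set \<Rightarrow> real) \<Rightarrow> ('a set \<Rightarrow> real) set" where
  "core M V = {P. fa_prob M P \<and> (\<forall>A\<in>sets M. P A \<le> V A)}"

definition T_invariant :: "'a measure \<Rightarrow> ('a \<Rightarrow> 'a) \<Rightarrow> ('a set \<Rightarrow> real) \<Rightarrow> bool" where
  "T_invariant M T V \<longleftrightarrow> (\<forall>A\<in>sets M. V (T -` A \<inter> space M) = V A)"

definition inv_sets :: "'a measure \<Rightarrow> ('a \<Rightarrow> 'a) \<Rightarrow> 'a set set" where
  "inv_sets M T = {A\<in>sets M. T -` A \<inter> space M = A}"

definition ergodic_cap :: "'a measure \<Rightarrow> ('a \<Rightarrow> 'a) \<Rightarrow> ('a set \<Rightarrow> real) \<Rightarrow> bool" where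
  "ergodic_cap M T V \<longleftrightarrow>
     (\<forall>B\<in>inv_sets M T. (V B = 0 \<or> V B = 1) \<and> (V B = 0 \<or> V (space M - B) = 0))"

definition inv_probs :: "'a measure \<Rightarrow> ('a \<Rightarrow> 'a) \<Rightarrow> ('a set \<Rightarrow> real) set" where
  "inv_probs M T = {P. is_prob M P \<and> T_invariant M T P}"

definition erg_probs :: "'a measure \<Rightarrow> ('a \<Rightarrow> 'a) \<Rightarrow> ('a set \<Rightarrow> real) set" where
  "erg_probs M T = {P\<in>inv_probs M T. \<forall>B\<in>inv_sets M T. P B = 0 \<or> P B = 1}"

definition mixing_avg :: "'a measure \<Rightarrow> ('a \<Rightarrow> 'a) \<Rightarrow> ('a set \<Rightarrow> real) \<Rightarrow> ('a set \<Rightarrow> real) \<Rightarrow> bool" where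
  "mixing_avg M T V Q \<longleftrightarrow>
     (\<forall>P\<in>core M V. \<forall>B\<in>sets M. \<forall>C\<in>sets M.
        (\<lambda>n. (\<Sum>i<n. P (B \<inter> ((T ^^ i) -` C \<inter> space M))) / real n)
          \<longlonglongrightarrow> P B * Q C)"

end

(*
  For P in the core and P B > 0, the averages
    X_n C = (1 / (n P B)) * (sum over i < n of P (B \<inter> T^-i C))
  are finitely additive probabilities with P B * X_n \<le> V. Such set functions form a compact
  set for setwise convergence, and they are countably additive because V, as the
  maximum over a compact set of probabilities, is continuous at the empty set. Every cluster
  point of (X_n) is T-invariant, since X_n (T^-1 C) - X_n C telescopes to O(1/n); ergodicity of
  V forces it to be 0-1 valued on invariant sets, with the same values as any invariant Q in the
  core. An invariant probability that is absolutely continuous with respect to an ergodic one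
  equals it, because its density is invariant almost everywhere; hence the cluster point is Q,
  X_n converges to Q setwise, and (ii) follows. With B the whole space a cluster point is such
  an ergodic Q.
  Conversely, under (iii) the averages for invariant B and C are constant, so
  P (B \<inter> C) = P B * Q C. Taking P = Q and C = B gives Q B \<in> {0, 1}, and taking C the
  complement of B gives P B = 0 for every P in the core or P (space M - B) = 0 for every P in
  the core; since V is attained on its core, V is ergodic.
*)

theory Submission
  imports Defs "HOL-Probability.Probability_Measure"
begin

definition prob_measure :: "'a measure \<Rightarrow> ('a set \<Rightarrow> real) \<Rightarrow> 'a measure" where
  "prob_measure M P = measure_of (space M) (sets M) (\<lambda>A. ennreal (P A))"

lemma is_prob_empty: assumes "is_prob M P" shows "P {} = 0"
proof -
  have "(\<lambda>n. P {}) sums P (\<Union>n. {})"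
    using assms unfolding is_prob_def by (auto simp: disjoint_family_on_def)
  hence "summable (\<lambda>n::nat. P {})" by (auto simp: sums_iff)
  thus ?thesis by (simp add: summable_const_iff)
qed

lemma sets_prob_measure [simp]: "sets (prob_measure M P) = sets M"
  unfolding prob_measure_def by (simp add: sets.space_closed)

lemma space_prob_measure [simp]: "space (prob_measure M P) = space M"
  unfolding prob_measure_def by (simp add: space_measure_of_conv)

lemma emeasure_prob_measure:
  assumes "is_prob M P" "A \<in> sets M"
  shows "emeasure (prob_measure M P) A = ennreal (P A)"
  unfolding prob_measure_def
proof (rule emeasure_measure_of_sigma[OF sets.sigma_algebra_axioms _ _ assms(2)])
  show "positive (sets M) (\<lambda>A. ennreal (P A))"
    using is_prob_empty[OF assms(1)] by (simp add: positive_def)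
  show "countably_additive (sets M) (\<lambda>A. ennreal (P A))"
    unfolding countably_additive_def
  proof (intro allI impI)
    fix F :: "nat \<Rightarrow> 'a set"
    assume F: "range F \<subseteq> sets M" "disjoint_family F" "\<Union> (range F) \<in> sets M"
    hence "(\<lambda>n. P (F n)) sums P (\<Union>n. F n)" "\<And>n. 0 \<le> P (F n)" "0 \<le> P (\<Union>n. F n)"
      using assms(1) unfolding is_prob_def by blast+
    hence "(\<lambda>n. ennreal (P (F n))) sums ennreal (P (\<Union>n. F n))" by simp
    thus "(\<Sum>i. ennreal (P (F i))) = ennreal (P (\<Union> (range F)))" by (simp add: sums_iff)
  qed
qed

lemma prob_space_prob_measure: "is_prob M P \<Longrightarrow> prob_space (prob_measure M P)"
  by (rule prob_spaceI) (simp add: emeasure_prob_measure is_prob_def)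

lemma measure_prob_measure:
  "is_prob M P \<Longrightarrow> A \<in> sets M \<Longrightarrow> measure (prob_measure M P) A = P A"
  using emeasure_prob_measure[of M P A] by (simp add: measure_def is_prob_def)

lemma is_prob_imp_fa_prob: assumes "is_prob M P" shows "fa_prob M P"
proof -
  interpret prob_space "prob_measure M P" by (rule prob_space_prob_measure[OF assms])
  show ?thesis unfolding fa_prob_def
  proof (intro conjI ballI impI allI)
    fix A B assume "A \<in> sets M" "B \<in> sets M" "A \<inter> B = {}"
    thus "P (A \<union> B) = P A + P B"
      using finite_measure_Union[of A B] by (simp add: measure_prob_measure[OF assms])
  qed (use assms in \<open>auto simp: is_prob_def\<close>)
qed

lemma fa_prob_empty: "fa_prob M P \<Longrightarrow> P {} = 0"
  unfolding fa_prob_def by (metis add_cancel_right_right inf.idem sets.empty_sets sup.idem)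

lemma fa_prob_Diff:
  assumes "fa_prob M P" "A \<in> sets M" "B \<in> sets M" "A \<subseteq> B"
  shows "P (B - A) = P B - P A"
proof -
  have "P ((B - A) \<union> A) = P (B - A) + P A" using assms unfolding fa_prob_def by blast
  moreover have "(B - A) \<union> A = B" using assms by auto
  ultimately show ?thesis by simp
qed

lemma fa_prob_compl: "fa_prob M P \<Longrightarrow> A \<in> sets M \<Longrightarrow> P (space M - A) = 1 - P A"
  using fa_prob_Diff[of M P A "space M"] sets.sets_into_space by (auto simp: fa_prob_def)

lemma fa_prob_nonneg: "fa_prob M P \<Longrightarrow> 0 \<le> P A"
  unfolding fa_prob_def by (cases "A \<in> sets M") auto

lemma fa_prob_mono:
  "fa_prob M P \<Longrightarrow> A \<in> sets M \<Longrightarrow> B \<in> sets M \<Longrightarrow> A \<subseteq> B \<Longrightarrow> P A \<le> P B"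
  using fa_prob_Diff[of M P A B] fa_prob_nonneg[of M P "B - A"] by simp

lemma fa_prob_le_1: assumes "fa_prob M P" shows "P A \<le> 1"
proof (cases "A \<in> sets M")
  case True
  thus ?thesis using fa_prob_compl[OF assms True] fa_prob_nonneg[OF assms, of "space M - A"] by simp
qed (use assms in \<open>simp add: fa_prob_def\<close>)

lemma fa_prob_finite_UN:
  fixes n :: nat
  assumes "fa_prob M P" "range F \<subseteq> sets M" "disjoint_family F"
  shows "P (\<Union>i<n. F i) = (\<Sum>i<n. P (F i))"
proof (induction n)
  case 0 thus ?case using fa_prob_empty[OF assms(1)] by simp
next
  case (Suc n)
  have "(\<Union>i<Suc n. F i) = (\<Union>i<n. F i) \<union> F n" by (auto simp: lessThan_Suc)
  moreover have "(\<Union>i<n. F i) \<inter> F n = {}"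
    using disjoint_family_onD[OF assms(3), of _ n] by (auto dest: less_imp_neq)
  moreover have "(\<Union>i<n. F i) \<in> sets M" using assms(2) by auto
  ultimately show ?case using Suc assms unfolding fa_prob_def by auto
qed

lemma upper_prob_attained:
  assumes "upper_prob M V" "A \<in> sets M"
  shows "\<exists>P\<in>core M V. P A = V A"
proof -
  obtain \<Lambda> where \<Lambda>: "\<forall>P\<in>\<Lambda>. is_prob M P" "\<forall>A\<in>sets M. (\<exists>P\<in>\<Lambda>. P A = V A) \<and> (\<forall>P\<in>\<Lambda>. P A \<le> V A)"
    using assms(1) unfolding upper_prob_def by blast
  then obtain P where "P \<in> \<Lambda>" "P A = V A" using assms(2) by blast
  moreover have "P \<in> core M V" using \<Lambda> \<open>P \<in> \<Lambda>\<close> is_prob_imp_fa_prob unfolding core_def by blast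
  ultimately show ?thesis by blast
qed

lemma upper_prob_le_1:
  assumes "upper_prob M V" "A \<in> sets M"
  shows "V A \<le> 1"
proof -
  obtain P where "P \<in> core M V" "P A = V A" using upper_prob_attained[OF assms] by blast
  thus ?thesis using fa_prob_le_1[of M P A] by (simp add: core_def)
qed

lemma is_prob_decseq_tendsto_0:
  assumes P: "is_prob M P" and A: "range A \<subseteq> sets M" "decseq A" "(\<Inter>n. A n) = {}"
  shows "(\<lambda>n. P (A n)) \<longlonglongrightarrow> 0"
proof -
  interpret prob_space "prob_measure M P" by (rule prob_space_prob_measure[OF P])
  have "(\<lambda>n. measure (prob_measure M P) (A n)) \<longlonglongrightarrow> measure (prob_measure M P) (\<Inter>n. A n)"
    by (rule finite_Lim_measure_decseq) (use A in auto)
  thus ?thesis using A by (simp add: measure_prob_measure[OF P])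
qed

text \<open>A Dini-type argument: the open sets {f. f (A n) < r} cover the compact set \<Lambda>, and they
  increase with n because the A n decrease.\<close>

lemma upper_prob_decseq_tendsto_0:
  assumes "upper_prob M V" "range A \<subseteq> sets M" "decseq A" "(\<Inter>n. A n) = {}"
  shows "(\<lambda>n. V (A n)) \<longlonglongrightarrow> 0"
proof (rule LIMSEQ_I)
  fix r :: real assume "0 < r"
  obtain \<Lambda> where \<Lambda>: "compact \<Lambda>" "\<forall>P\<in>\<Lambda>. is_prob M P"
    "\<forall>A\<in>sets M. (\<exists>P\<in>\<Lambda>. P A = V A) \<and> (\<forall>P\<in>\<Lambda>. P A \<le> V A)"
    using assms(1) unfolding upper_prob_def by blast
  have P_lim: "(\<lambda>n. P (A n)) \<longlonglongrightarrow> 0" if "P \<in> \<Lambda>" for P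
    using \<Lambda>(2) that is_prob_decseq_tendsto_0 assms(2-4) by blast
  have "\<Lambda> \<subseteq> (\<Union>n. {f. f (A n) < r})"
  proof
    fix P assume "P \<in> \<Lambda>"
    then obtain n where "norm (P (A n)) < r" using LIMSEQ_D[OF P_lim \<open>0 < r\<close>] by auto
    thus "P \<in> (\<Union>n. {f. f (A n) < r})" by (auto simp: abs_less_iff)
  qed
  moreover have "open {f :: 'a set \<Rightarrow> real. f (A n) < r}" for n
    by (rule open_Collect_less) (auto intro: continuous_on_const)
  ultimately obtain N where N: "finite N" "\<Lambda> \<subseteq> (\<Union>n\<in>N. {f. f (A n) < r})"
    using compactE_image[OF \<Lambda>(1), of UNIV "\<lambda>n. {f. f (A n) < r}"] by metis
  have "norm (V (A n)) < r" if "n \<ge> Max (insert 0 N)" for n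
  proof -
    obtain P where P: "P \<in> \<Lambda>" "P (A n) = V (A n)" using \<Lambda>(3) assms(2) by blast
    then obtain k where k: "k \<in> N" "P (A k) < r" using N by auto
    have "k \<le> n" using k N that by (meson Max_ge finite_insert insertI2 order_trans)
    hence "A n \<subseteq> A k" using assms(3) by (simp add: decseq_def)
    moreover have fa: "fa_prob M P" using \<Lambda> P is_prob_imp_fa_prob by blast
    ultimately have "P (A n) \<le> P (A k)" using fa_prob_mono[OF fa] assms(2) by auto
    thus ?thesis using P k fa_prob_nonneg[OF fa, of "A n"] by simp
  qed
  thus "\<exists>n0. \<forall>n\<ge>n0. norm (V (A n) - 0) < r" by auto
qed

definition dominated_fa_probs :: "'a measure \<Rightarrow> ('a set \<Rightarrow> real) \<Rightarrow> real \<Rightarrow> ('a set \<Rightarrow> real) set"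
  where "dominated_fa_probs M V c = {R. fa_prob M R \<and> (\<forall>A\<in>sets M. c * R A \<le> V A)}"

lemma dominated_fa_probs_1: "dominated_fa_probs M V 1 = core M V"
  unfolding dominated_fa_probs_def core_def by simp

lemma dominated_fa_prob_is_prob:
  assumes V: "upper_prob M V" and R: "R \<in> dominated_fa_probs M V c" and "0 < c"
  shows "is_prob M R"
proof -
  have fa: "fa_prob M R" and dom: "\<And>A. A \<in> sets M \<Longrightarrow> R A \<le> V A / c"
    using R \<open>0 < c\<close> by (auto simp: dominated_fa_probs_def field_simps mult.commute)
  have "(\<lambda>n. R (F n)) sums R (\<Union>n. F n)" if F: "range F \<subseteq> sets M" "disjoint_family F"
    for F :: "nat \<Rightarrow> 'a set"
  proof -
    define D where "D n = (\<Union>i. F i) - (\<Union>i<n. F i)" for n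
    have D: "range D \<subseteq> sets M" unfolding D_def using F by auto
    have "decseq D" "(\<Inter>n. D n) = {}" unfolding D_def decseq_def by auto
    hence "(\<lambda>n. V (D n) / c) \<longlonglongrightarrow> 0"
      using tendsto_divide_zero[OF upper_prob_decseq_tendsto_0[OF V D]] by simp
    hence "(\<lambda>n. R (D n)) \<longlonglongrightarrow> 0"
      by (rule real_tendsto_sandwich[rotated 2, OF tendsto_const])
        (use fa_prob_nonneg[OF fa] dom D in auto)
    moreover have "R (D n) = R (\<Union>i. F i) - (\<Sum>i<n. R (F i))" for n
      unfolding D_def fa_prob_finite_UN[OF fa F, symmetric]
      by (rule fa_prob_Diff[OF fa]) (use F in auto)
    ultimately have "(\<lambda>n. R (\<Union>i. F i) - (R (\<Union>i. F i) - (\<Sum>i<n. R (F i)))) \<longlonglongrightarrow> R (\<Union>i. F i) - 0"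
      by (intro tendsto_diff) auto
    thus ?thesis unfolding sums_def by simp
  qed
  thus ?thesis using fa unfolding fa_prob_def is_prob_def by auto
qed

text \<open>By Tychonoff, since finitely additive probabilities take values in [0, 1] and all
  defining conditions are closed for setwise convergence.\<close>

lemma compact_dominated_fa_probs: "compact (dominated_fa_probs M V c)"
proof -
  have box: "compact (PiE UNIV (\<lambda>_::'a set. {0..1::real}))"
    using compactin_PiE[of "\<lambda>_. euclidean" UNIV "\<lambda>_::'a set. {0..1::real}"]
    by (simp add: euclidean_product_topology)
  have "dominated_fa_probs M V c =
      (\<Inter>A\<in>-sets M. {R. R A = 0}) \<inter> (\<Inter>A\<in>sets M. {R. 0 \<le> R A}) \<inter> {R. R (space M) = 1} \<inter>
      (\<Inter>A\<in>sets M. \<Inter>B\<in>{B \<in> sets M. A \<inter> B = {}}. {R. R (A \<union> B) = R A + R B}) \<inter>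
      (\<Inter>A\<in>sets M. {R. c * R A \<le> V A})"
    unfolding dominated_fa_probs_def fa_prob_def by auto
  also have "closed \<dots>"
    by (intro closed_Int closed_INT closed_Collect_eq closed_Collect_le ballI;
        intro continuous_intros continuous_on_product_coordinates)
  finally have "compact (PiE UNIV (\<lambda>_. {0..1}) \<inter> dominated_fa_probs M V c)"
    by (rule compact_Int_closed[OF box])
  moreover have "dominated_fa_probs M V c \<subseteq> PiE UNIV (\<lambda>_. {0..1})"
    unfolding dominated_fa_probs_def using fa_prob_nonneg fa_prob_le_1 by auto
  ultimately show ?thesis by (simp only: Int_absorb1)
qed

definition cluster_point :: "(nat \<Rightarrow> 'b::topological_space) \<Rightarrow> 'b \<Rightarrow> bool" where
  "cluster_point X x \<longleftrightarrow> inf (nhds x) (filtermap X sequentially) \<noteq> bot"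

lemma compact_obtain_cluster_point:
  assumes "compact S" "\<And>n. X n \<in> S"
  obtains x where "x \<in> S" "cluster_point X x"
proof -
  have "filtermap X sequentially \<noteq> bot" by (simp add: filtermap_bot_iff)
  moreover have "eventually (\<lambda>y. y \<in> S) (filtermap X sequentially)"
    using assms(2) by (simp add: eventually_filtermap)
  ultimately show ?thesis
    using assms(1) that unfolding compact_filter cluster_point_def by blast
qed

lemma cluster_point_continuous_tendsto:
  fixes \<phi> :: "'b::topological_space \<Rightarrow> 'c::t2_space"
  assumes "continuous_on UNIV \<phi>" "(\<lambda>n. \<phi> (X n)) \<longlonglongrightarrow> l" "cluster_point X x"
  shows "\<phi> x = l"
proof (rule tendsto_unique[OF assms(3)[unfolded cluster_point_def]])
  have "(\<phi> \<longlongrightarrow> \<phi> x) (nhds x)"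
    using assms(1) unfolding continuous_on_def by (simp add: tendsto_at_iff_tendsto_nhds)
  thus "(\<phi> \<longlongrightarrow> \<phi> x) (inf (nhds x) (filtermap X sequentially))"
    by (rule tendsto_mono[rotated]) simp
  have "(\<phi> \<longlongrightarrow> l) (filtermap X sequentially)"
    using assms(2) by (simp add: filterlim_filtermap)
  thus "(\<phi> \<longlongrightarrow> l) (inf (nhds x) (filtermap X sequentially))"
    by (rule tendsto_mono[rotated]) simp
qed

lemma compact_unique_cluster_point_tendsto:
  assumes "compact S" "\<And>n. X n \<in> S" "\<And>x. x \<in> S \<Longrightarrow> cluster_point X x \<Longrightarrow> x = q"
  shows "X \<longlonglongrightarrow> q"
  unfolding tendsto_def
proof (intro allI impI, rule ccontr)
  fix U assume U: "open U" "q \<in> U" "\<not> eventually (\<lambda>n. X n \<in> U) sequentially"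
  define F0 where "F0 = inf sequentially (principal {n. X n \<notin> U})"
  define F where "F = filtermap X F0"
  have "F0 \<noteq> bot"
  proof
    assume "F0 = bot"
    hence "eventually (\<lambda>_. False) F0" by simp
    hence "eventually (\<lambda>n. X n \<in> U) sequentially"
      unfolding F0_def eventually_inf_principal by (auto elim: eventually_mono)
    thus False using U(3) by blast
  qed
  hence "F \<noteq> bot" by (simp add: F_def filtermap_bot_iff)
  moreover have "eventually (\<lambda>y. y \<in> S \<inter> - U) F"
    unfolding F_def F0_def eventually_filtermap eventually_inf_principal using assms(2) by auto
  moreover have "compact (S \<inter> - U)" using assms(1) U(1) by (intro compact_Int_closed) auto
  ultimately obtain x where x: "x \<in> S \<inter> - U" "inf (nhds x) F \<noteq> bot"
    unfolding compact_filter by blast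
  have "F \<le> filtermap X sequentially" unfolding F_def F0_def by (intro filtermap_mono) simp
  hence "cluster_point X x"
    using x(2) unfolding cluster_point_def by (metis inf_mono order_refl bot.extremum_uniqueI)
  thus False using assms(3) x U(2) by blast
qed

lemma measurable_funpow: "T \<in> measurable M M \<Longrightarrow> T ^^ n \<in> measurable M M"
  by (induction n) (auto intro: measurable_comp simp: measurable_ident)

lemma funpow_vimage_Suc:
  "T \<in> measurable M M \<Longrightarrow>
     (T ^^ Suc n) -` A \<inter> space M = T -` ((T ^^ n) -` A \<inter> space M) \<inter> space M"
  using measurable_space[of T M M] by (auto simp: funpow_swap1)

lemma funpow_vimage_invariant:
  assumes T: "T \<in> measurable M M" and f: "\<And>A. A \<in> sets M \<Longrightarrow> f (T -` A \<inter> space M) = f A"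
    and A: "A \<in> sets M"
  shows "f ((T ^^ n) -` A \<inter> space M) = f A"
proof (induction n)
  case 0 thus ?case using sets.Int_space_eq2[OF A] by simp
next
  case (Suc n)
  have "(T ^^ n) -` A \<inter> space M \<in> sets M" using measurable_sets[OF measurable_funpow[OF T] A] .
  thus ?case using f Suc.IH by (simp only: funpow_vimage_Suc[OF T])
qed

lemma funpow_vimage_inv_sets:
  assumes T: "T \<in> measurable M M" and B: "B \<in> inv_sets M T"
  shows "(T ^^ n) -` B \<inter> space M = B"
proof (induction n)
  case 0 thus ?case using B sets.sets_into_space unfolding inv_sets_def by auto
next
  case (Suc n) thus ?case using B unfolding funpow_vimage_Suc[OF T] inv_sets_def by simp
qed

lemma inv_sets_compl: "T \<in> measurable M M \<Longrightarrow> B \<in> inv_sets M T \<Longrightarrow> space M - B \<in> inv_sets M T"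
  using measurable_space[of T M M] unfolding inv_sets_def by auto

text \<open>The invariant set consists of the points whose orbit eventually stays in A; it differs
  from A only on the null set of points whose orbit meets the exceptional set.\<close>

lemma AE_invariant_obtain_invariant_set:
  assumes N: "finite_measure N" and T: "T \<in> measurable N N"
    and inv: "\<And>B. B \<in> sets N \<Longrightarrow> measure N (T -` B \<inter> space N) = measure N B"
    and A: "A \<in> sets N" and AE_A: "AE x in N. x \<in> A \<longleftrightarrow> T x \<in> A"
  obtains A' where "A' \<in> sets N" "T -` A' \<inter> space N = A'" "measure N A' = measure N A"
proof -
  obtain E where E: "{x \<in> space N. \<not> (x \<in> A \<longleftrightarrow> T x \<in> A)} \<subseteq> E" "E \<in> null_sets N"
    using AE_E[OF AE_A] by (metis null_setsI)
  define E' where "E' = (\<Union>n. (T ^^ n) -` E \<inter> space N)"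
  have "(T ^^ n) -` E \<inter> space N \<in> null_sets N" for n
    using funpow_vimage_invariant[where f = "measure N", OF T inv, of E n] measurable_sets[OF measurable_funpow[OF T]] E(2)
    by (simp add: finite_measure.emeasure_eq_measure[OF N] null_sets_def)
  hence E': "E' \<in> null_sets N" unfolding E'_def by (rule null_sets_UN)
  have orbit: "x \<in> A \<longleftrightarrow> (T ^^ n) x \<in> A" if x: "x \<in> space N" "x \<notin> E'" for x n
  proof (induction n)
    case (Suc n)
    have "(T ^^ n) x \<in> space N" using measurable_space[OF measurable_funpow[OF T] x(1)] .
    moreover have "(T ^^ n) x \<notin> E" using x unfolding E'_def by auto
    ultimately show ?case using Suc E(1) by auto
  qed simp
  define A' where "A' = {x \<in> space N. eventually (\<lambda>n. (T ^^ n) x \<in> A) sequentially}"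
  have A'_eq: "A' = (\<Union>m. \<Inter>n\<in>{m..}. (T ^^ n) -` A \<inter> space N)"
    unfolding A'_def eventually_sequentially by auto
  have "(\<Inter>n\<in>{m..}. (T ^^ n) -` A \<inter> space N) \<in> sets N" for m
    using measurable_sets[OF measurable_funpow[OF T] A] by (intro sets.countable_INT) auto
  hence A'_sets: "A' \<in> sets N" unfolding A'_eq by (intro sets.countable_UN) blast
  moreover have "T -` A' \<inter> space N = A'"
  proof -
    have "eventually (\<lambda>n. (T ^^ n) (T x) \<in> A) sequentially \<longleftrightarrow>
        eventually (\<lambda>n. (T ^^ n) x \<in> A) sequentially" for x
      using eventually_sequentially_Suc[of "\<lambda>n. (T ^^ n) x \<in> A"] by (simp add: funpow_swap1)
    thus ?thesis unfolding A'_def using measurable_space[OF T] by auto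
  qed
  moreover have "measure N A' = measure N A"
  proof (rule finite_measure.finite_measure_eq_AE[OF N _ A'_sets A])
    show "AE x in N. x \<in> A' \<longleftrightarrow> x \<in> A"
      using AE_not_in[OF E'] AE_space
      by eventually_elim (use orbit in \<open>auto simp: A'_def\<close>)
  qed
  ultimately show ?thesis using that by blast
qed

lemma (in finite_measure) measure_Diff_swap:
  "A \<in> sets M \<Longrightarrow> B \<in> sets M \<Longrightarrow> measure M A = measure M B \<Longrightarrow> measure M (A - B) = measure M (B - A)"
  by (metis Int_commute finite_measure_Diff')

locale invariant_abs_cont_probs = \<mu>: prob_space \<mu> + \<nu>: prob_space \<nu>
  for \<mu> \<nu> :: "'a measure" +
  fixes T :: "'a \<Rightarrow> 'a"
  assumes sets_eq: "sets \<nu> = sets \<mu>"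
    and abs_cont: "absolutely_continuous \<mu> \<nu>"
    and T_meas: "T \<in> measurable \<mu> \<mu>"
    and inv_\<mu>: "\<And>A. A \<in> sets \<mu> \<Longrightarrow> measure \<mu> (T -` A \<inter> space \<mu>) = measure \<mu> A"
    and inv_\<nu>: "\<And>A. A \<in> sets \<mu> \<Longrightarrow> measure \<nu> (T -` A \<inter> space \<mu>) = measure \<nu> A"
begin

definition dens :: "'a \<Rightarrow> real" where "dens x = enn2real (RN_deriv \<mu> \<nu> x)"

lemma borel_measurable_dens: "dens \<in> borel_measurable \<mu>"
  unfolding dens_def by measurable

lemma
  assumes "D \<in> sets \<mu>"
  shows measure_\<nu>_eq_integral: "measure \<nu> D = (\<integral>x. dens x * indicator D x \<partial>\<mu>)"
    and integrable_dens_indicator: "integrable \<mu> (\<lambda>x. dens x * indicator D x)"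
proof -
  have "integrable \<nu> (indicator D :: 'a \<Rightarrow> real)"
    using \<nu>.emeasure_finite[of D] assms sets_eq
    by (simp add: integrable_indicator_iff less_top[symmetric])
  thus "integrable \<mu> (\<lambda>x. dens x * indicator D x)"
    unfolding dens_def using assms
    by (subst \<mu>.RN_deriv_integrable[symmetric, OF \<nu>.sigma_finite_measure_axioms abs_cont sets_eq]) auto
  have "measure \<nu> D = integral\<^sup>L \<nu> (indicator D)" using assms sets_eq by simp
  also have "\<dots> = (\<integral>x. dens x * indicator D x \<partial>\<mu>)"
    unfolding dens_def using assms
    by (intro \<mu>.RN_deriv_integral[OF \<nu>.sigma_finite_measure_axioms abs_cont sets_eq]) auto
  finally show "measure \<nu> D = (\<integral>x. dens x * indicator D x \<partial>\<mu>)" .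
qed

lemma integrable_dens: "integrable \<mu> dens" and integral_dens: "(\<integral>x. dens x \<partial>\<mu>) = 1"
proof -
  have "integrable \<mu> (\<lambda>x. dens x * indicator (space \<mu>) x) = integrable \<mu> dens"
    by (rule Bochner_Integration.integrable_cong) auto
  thus "integrable \<mu> dens" using integrable_dens_indicator[OF sets.top] by simp
  have "(\<integral>x. dens x * indicator (space \<mu>) x \<partial>\<mu>) = (\<integral>x. dens x \<partial>\<mu>)"
    by (rule Bochner_Integration.integral_cong) auto
  thus "(\<integral>x. dens x \<partial>\<mu>) = 1"
    using measure_\<nu>_eq_integral[OF sets.top] \<nu>.prob_space sets_eq_imp_space_eq[OF sets_eq] by simp
qed

lemma
  assumes "D \<in> sets \<mu>"
  shows integrable_indicator_mult_diff_dens: "integrable \<mu> (\<lambda>x. indicator D x * (c - dens x))"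
    and integral_indicator_mult_diff_dens:
      "(\<integral>x. indicator D x * (c - dens x) \<partial>\<mu>) = c * measure \<mu> D - measure \<nu> D"
proof -
  have "integrable \<mu> (\<lambda>x. c * indicator D x :: real)"
    using \<mu>.emeasure_finite[of D] assms by (simp add: integrable_indicator_iff less_top[symmetric])
  thus "integrable \<mu> (\<lambda>x. indicator D x * (c - dens x))"
    using integrable_dens_indicator[OF assms] by (simp add: algebra_simps)
  show "(\<integral>x. indicator D x * (c - dens x) \<partial>\<mu>) = c * measure \<mu> D - measure \<nu> D"
    using \<mu>.emeasure_finite[of D] integrable_dens_indicator[OF assms] assms
    by (simp add: measure_\<nu>_eq_integral algebra_simps integrable_indicator_iff less_top[symmetric])
qed

text \<open>Invariance of \<mu> and \<nu> makes the signed measure c \<mu> - \<nu> take equal values on the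
  differences of A = {dens < c} and its preimage under T; it is nonnegative on the first and
  nonpositive on the second, so both values vanish.\<close>

lemma AE_dens_less_invariant: "AE x in \<mu>. dens x < c \<longleftrightarrow> dens (T x) < c"
proof -
  define A where "A = {x \<in> space \<mu>. dens x < c}"
  define A' where "A' = T -` A \<inter> space \<mu>"
  have A: "A \<in> sets \<mu>" unfolding A_def using borel_measurable_dens by measurable
  hence A': "A' \<in> sets \<mu>" unfolding A'_def using measurable_sets[OF T_meas] by blast
  define \<phi> where "\<phi> D = c * measure \<mu> D - measure \<nu> D" for D
  have \<phi>_eq: "\<phi> D = (\<integral>x. indicator D x * (c - dens x) \<partial>\<mu>)" if "D \<in> sets \<mu>" for D
    using integral_indicator_mult_diff_dens[OF that] by (simp add: \<phi>_def)
  have D1: "A - A' \<in> sets \<mu>" and D2: "A' - A \<in> sets \<mu>" using A A' by auto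
  have \<mu>_swap: "measure \<mu> (A - A') = measure \<mu> (A' - A)"
    using \<mu>.measure_Diff_swap inv_\<mu> A A' unfolding A'_def by auto
  moreover have "measure \<nu> (A - A') = measure \<nu> (A' - A)"
    using \<nu>.measure_Diff_swap inv_\<nu> A A' sets_eq unfolding A'_def by auto
  ultimately have "\<phi> (A - A') = \<phi> (A' - A)" unfolding \<phi>_def by simp
  moreover have "0 \<le> \<phi> (A - A')"
    unfolding \<phi>_eq[OF D1] by (rule Bochner_Integration.integral_nonneg) (auto simp: A_def indicator_def)
  moreover have "0 \<le> (\<integral>x. - (indicator (A' - A) x * (c - dens x)) \<partial>\<mu>)"
    by (rule Bochner_Integration.integral_nonneg) (auto simp: A_def A'_def indicator_def)
  hence "\<phi> (A' - A) \<le> 0" unfolding \<phi>_eq[OF D2] by simp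
  ultimately have "(\<integral>x. indicator (A - A') x * (c - dens x) \<partial>\<mu>) = 0"
    using \<phi>_eq[OF D1] by simp
  hence "AE x in \<mu>. indicator (A - A') x * (c - dens x) = 0"
    using integral_nonneg_eq_0_iff_AE[OF integrable_indicator_mult_diff_dens[OF D1]] by (simp add: A_def indicator_def)
  hence AE_D1: "AE x in \<mu>. x \<notin> A - A'"
    by eventually_elim (auto simp: A_def indicator_def split: if_split_asm)
  hence "measure \<mu> (A' - A) = 0"
    using \<mu>_swap AE_iff_null_sets[OF D1] by (simp add: null_sets_def measure_def)
  hence "AE x in \<mu>. x \<notin> A' - A"
    using AE_iff_null_sets[OF D2] D2 by (simp add: null_sets_def \<mu>.emeasure_eq_measure)
  with AE_D1 show ?thesis
    using AE_space by eventually_elim (auto simp: A_def A'_def dest: measurable_space[OF T_meas])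
qed

lemma AE_dens_ge:
  assumes erg: "\<And>A. A \<in> sets \<mu> \<Longrightarrow> T -` A \<inter> space \<mu> = A \<Longrightarrow> measure \<mu> A = 0 \<or> measure \<mu> A = 1"
    and "c < 1"
  shows "AE x in \<mu>. c \<le> dens x"
proof -
  define A where "A = {x \<in> space \<mu>. dens x < c}"
  have A: "A \<in> sets \<mu>" unfolding A_def using borel_measurable_dens by measurable
  have "AE x in \<mu>. x \<in> A \<longleftrightarrow> T x \<in> A"
    using AE_dens_less_invariant[of c] AE_space
    by eventually_elim (auto simp: A_def dest: measurable_space[OF T_meas])
  then obtain A' where "A' \<in> sets \<mu>" "T -` A' \<inter> space \<mu> = A'" "measure \<mu> A' = measure \<mu> A"
    using AE_invariant_obtain_invariant_set[OF \<mu>.finite_measure_axioms T_meas inv_\<mu> A] by metis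
  hence "measure \<mu> A = 0 \<or> measure \<mu> A = 1" using erg by metis
  moreover have "measure \<mu> A \<noteq> 1"
  proof
    assume "measure \<mu> A = 1"
    hence "AE x in \<mu>. x \<in> A" using \<mu>.AE_in_set_eq_1[OF A] by simp
    hence "AE x in \<mu>. dens x \<le> c" by eventually_elim (auto simp: A_def)
    hence "(\<integral>x. dens x \<partial>\<mu>) \<le> (\<integral>x. c \<partial>\<mu>)" by (intro integral_mono_AE integrable_dens) auto
    thus False using integral_dens \<mu>.prob_space \<open>c < 1\<close> by simp
  qed
  ultimately have "measure \<mu> A = 0" by blast
  hence "AE x in \<mu>. x \<notin> A"
    using AE_iff_null_sets[OF A] A by (simp add: null_sets_def \<mu>.emeasure_eq_measure)
  thus ?thesis using AE_space by eventually_elim (auto simp: A_def)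
qed

lemma measure_eq_if_ergodic:
  assumes erg: "\<And>A. A \<in> sets \<mu> \<Longrightarrow> T -` A \<inter> space \<mu> = A \<Longrightarrow> measure \<mu> A = 0 \<or> measure \<mu> A = 1"
    and A: "A \<in> sets \<mu>"
  shows "measure \<nu> A = measure \<mu> A"
proof -
  have le: "measure \<mu> B \<le> measure \<nu> B" if B: "B \<in> sets \<mu>" for B
  proof (rule field_le_mult_one_interval)
    fix c :: real assume "0 < c" "c < 1"
    have "integrable \<mu> (\<lambda>x. c * indicator B x :: real)"
      using \<mu>.emeasure_finite[of B] B by (simp add: integrable_indicator_iff less_top[symmetric])
    hence "(\<integral>x. c * indicator B x \<partial>\<mu>) \<le> (\<integral>x. dens x * indicator B x \<partial>\<mu>)"
      using AE_dens_ge[OF erg \<open>c < 1\<close>] integrable_dens_indicator[OF B]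
      by (intro integral_mono_AE) (auto elim: eventually_mono simp: indicator_def)
    thus "c * measure \<mu> B \<le> measure \<nu> B" using B by (simp add: measure_\<nu>_eq_integral)
  qed
  have "measure \<mu> (space \<mu> - A) \<le> measure \<nu> (space \<mu> - A)" using le A by auto
  hence "measure \<nu> A \<le> measure \<mu> A"
    using \<mu>.prob_compl[OF A] \<nu>.prob_compl A sets_eq sets_eq_imp_space_eq[OF sets_eq] by simp
  with le[OF A] show ?thesis by simp
qed

end

lemma is_prob_midpoint:
  assumes "is_prob M R1" "is_prob M R2"
  shows "is_prob M (\<lambda>A. (R1 A + R2 A) / 2)"
  unfolding is_prob_def
proof (intro conjI allI impI ballI)
  fix F :: "nat \<Rightarrow> 'a set" assume F: "range F \<subseteq> sets M" "disjoint_family F"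
  have "(\<lambda>n. R1 (F n)) sums R1 (\<Union>n. F n)" "(\<lambda>n. R2 (F n)) sums R2 (\<Union>n. F n)"
    using assms F unfolding is_prob_def by auto
  from sums_divide[OF sums_add[OF this], of 2]
  show "(\<lambda>n. (R1 (F n) + R2 (F n)) / 2) sums ((R1 (\<Union>n. F n) + R2 (\<Union>n. F n)) / 2)" .
qed (use assms in \<open>auto simp: is_prob_def\<close>)

lemma invariant_abs_cont_probs_prob_measure:
  assumes T: "T \<in> measurable M M" and S: "S \<in> inv_probs M T" and R: "R \<in> inv_probs M T"
    and abs_cont: "\<And>A. A \<in> sets M \<Longrightarrow> S A = 0 \<Longrightarrow> R A = 0"
  shows "invariant_abs_cont_probs (prob_measure M S) (prob_measure M R) T"
proof -
  have inv: "measure (prob_measure M P) (T -` A \<inter> space M) = measure (prob_measure M P) A"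
    if "P \<in> inv_probs M T" "A \<in> sets M" for P A
    using that measurable_sets[OF T] by (simp add: inv_probs_def measure_prob_measure T_invariant_def)
  have S': "is_prob M S" and R': "is_prob M R" using S R by (auto simp: inv_probs_def)
  have "absolutely_continuous (prob_measure M S) (prob_measure M R)"
    unfolding absolutely_continuous_def
  proof
    fix A assume "A \<in> null_sets (prob_measure M S)"
    hence "A \<in> sets M" "S A = 0"
      using measure_prob_measure[OF S', of A] by (auto simp: null_sets_def measure_def)
    thus "A \<in> null_sets (prob_measure M R)"
      using abs_cont by (simp add: null_sets_def emeasure_prob_measure[OF R'])
  qed
  moreover have "T \<in> measurable (prob_measure M S) (prob_measure M S)"
    using T measurable_cong_sets[of "prob_measure M S" M "prob_measure M S" M] by simp
  ultimately show ?thesis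
    by (intro invariant_abs_cont_probs.intro invariant_abs_cont_probs_axioms.intro
        prob_space_prob_measure S' R') (simp_all add: inv S R)
qed

text \<open>The midpoint S of R1 and R2 is ergodic because R1 and R2 agree on invariant sets, and
  R1 is absolutely continuous with respect to it because R1 \<le> 2 S.\<close>

lemma inv_probs_eq_if_agree_on_inv_sets:
  assumes T: "T \<in> measurable M M" and R1: "R1 \<in> inv_probs M T" and R2: "R2 \<in> inv_probs M T"
    and agree: "\<And>B. B \<in> inv_sets M T \<Longrightarrow> R1 B = R2 B"
    and R1_01: "\<And>B. B \<in> inv_sets M T \<Longrightarrow> R1 B = 0 \<or> R1 B = 1"
  shows "R1 = R2"
proof -
  define S where "S A = (R1 A + R2 A) / 2" for A
  have R1': "is_prob M R1" and R2': "is_prob M R2" using R1 R2 by (auto simp: inv_probs_def)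
  have S_prob: "is_prob M S" unfolding S_def by (rule is_prob_midpoint[OF R1' R2'])
  hence S: "S \<in> inv_probs M T"
    using R1 R2 by (simp add: inv_probs_def T_invariant_def S_def)
  have "R1 A = 0" if "A \<in> sets M" "S A = 0" for A
    using that fa_prob_nonneg[OF is_prob_imp_fa_prob[OF R1'], of A]
      fa_prob_nonneg[OF is_prob_imp_fa_prob[OF R2'], of A] by (simp add: S_def)
  then interpret invariant_abs_cont_probs "prob_measure M S" "prob_measure M R1" T
    by (rule invariant_abs_cont_probs_prob_measure[OF T S R1])
  have "measure (prob_measure M S) B = 0 \<or> measure (prob_measure M S) B = 1"
    if "B \<in> sets M" "T -` B \<inter> space M = B" for B
    using that agree[of B] R1_01[of B] by (simp add: measure_prob_measure[OF S_prob] inv_sets_def S_def)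
  hence "R1 A = S A" if "A \<in> sets M" for A
    using measure_eq_if_ergodic[of A] that
    by (simp add: measure_prob_measure[OF S_prob] measure_prob_measure[OF R1'])
  hence "R1 A = R2 A" for A
    using R1' R2' by (cases "A \<in> sets M") (auto simp: S_def is_prob_def)
  thus "R1 = R2" by (rule ext)
qed

text \<open>Index n stands for the average of n + 1 terms, so the denominator never vanishes.\<close>

definition cond_avg ::
    "'a measure \<Rightarrow> ('a \<Rightarrow> 'a) \<Rightarrow> ('a set \<Rightarrow> real) \<Rightarrow> 'a set \<Rightarrow> nat \<Rightarrow> 'a set \<Rightarrow> real" where
  "cond_avg M T P B n A = (if A \<in> sets M then
      (\<Sum>i<Suc n. P (B \<inter> ((T ^^ i) -` A \<inter> space M))) / (real (Suc n) * P B) else 0)"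

lemma Int_funpow_vimage_in_sets:
  "T \<in> measurable M M \<Longrightarrow> A \<in> sets M \<Longrightarrow> B \<in> sets M \<Longrightarrow> B \<inter> ((T ^^ i) -` A \<inter> space M) \<in> sets M"
  using measurable_sets[OF measurable_funpow] by blast

lemma fa_prob_cond_avg:
  assumes T: "T \<in> measurable M M" and P: "fa_prob M P" and B: "B \<in> sets M" "0 < P B"
  shows "fa_prob M (cond_avg M T P B n)"
  unfolding fa_prob_def
proof (intro conjI allI impI ballI)
  have "B \<inter> ((T ^^ i) -` space M \<inter> space M) = B" for i
    using sets.sets_into_space[OF B(1)] measurable_space[OF measurable_funpow[OF T]] by auto
  thus "cond_avg M T P B n (space M) = 1" using B(2) by (simp add: cond_avg_def)
next
  fix A C assume AC: "A \<in> sets M" "C \<in> sets M" "A \<inter> C = {}"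
  have "P (B \<inter> ((T ^^ i) -` (A \<union> C) \<inter> space M)) =
        P (B \<inter> ((T ^^ i) -` A \<inter> space M)) + P (B \<inter> ((T ^^ i) -` C \<inter> space M))" for i
  proof -
    have "B \<inter> ((T ^^ i) -` (A \<union> C) \<inter> space M) =
        (B \<inter> ((T ^^ i) -` A \<inter> space M)) \<union> (B \<inter> ((T ^^ i) -` C \<inter> space M))" by auto
    moreover have "(B \<inter> ((T ^^ i) -` A \<inter> space M)) \<inter> (B \<inter> ((T ^^ i) -` C \<inter> space M)) = {}"
      using AC by auto
    ultimately show ?thesis
      using P Int_funpow_vimage_in_sets[OF T AC(1) B(1)] Int_funpow_vimage_in_sets[OF T AC(2) B(1)]
      unfolding fa_prob_def by metis
  qed
  thus "cond_avg M T P B n (A \<union> C) = cond_avg M T P B n A + cond_avg M T P B n C"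
    using AC by (simp add: cond_avg_def sum.distrib add_divide_distrib)
qed (use B(2) fa_prob_nonneg[OF P] in
    \<open>auto simp: cond_avg_def simp del: sum.lessThan_Suc intro!: divide_nonneg_pos sum_nonneg\<close>)

lemma cond_avg_dominated:
  assumes T: "T \<in> measurable M M" and V: "T_invariant M T V"
    and P: "P \<in> core M V" and B: "B \<in> sets M" "0 < P B" and A: "A \<in> sets M"
  shows "P B * cond_avg M T P B n A \<le> V A"
proof -
  have fa: "fa_prob M P" using P by (simp add: core_def)
  have "P (B \<inter> ((T ^^ i) -` A \<inter> space M)) \<le> V A" for i
  proof -
    have A_i: "(T ^^ i) -` A \<inter> space M \<in> sets M" using measurable_sets[OF measurable_funpow[OF T] A] .
    have "P (B \<inter> ((T ^^ i) -` A \<inter> space M)) \<le> P ((T ^^ i) -` A \<inter> space M)"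
      by (rule fa_prob_mono[OF fa Int_funpow_vimage_in_sets[OF T A B(1)] A_i]) auto
    also have "\<dots> \<le> V ((T ^^ i) -` A \<inter> space M)" using P A_i by (simp add: core_def)
    also have "\<dots> = V A"
      using V unfolding T_invariant_def by (intro funpow_vimage_invariant[OF T _ A]) auto
    finally show ?thesis .
  qed
  hence "(\<Sum>i<Suc n. P (B \<inter> ((T ^^ i) -` A \<inter> space M))) \<le> real (Suc n) * V A"
    using sum_mono[of "{..<Suc n}" "\<lambda>i. P (B \<inter> ((T ^^ i) -` A \<inter> space M))" "\<lambda>_. V A"] by simp
  thus ?thesis
    using A B(2) by (simp add: cond_avg_def pos_divide_le_eq mult.commute del: sum.lessThan_Suc of_nat_Suc)
qed

lemma cond_avg_in_dominated_fa_probs: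
  assumes "T \<in> measurable M M" "T_invariant M T V" "P \<in> core M V" "B \<in> sets M" "0 < P B"
  shows "cond_avg M T P B n \<in> dominated_fa_probs M V (P B)"
  using fa_prob_cond_avg[of T M P B n] cond_avg_dominated[OF assms] assms
  by (simp add: dominated_fa_probs_def core_def)

lemma cond_avg_vimage_diff_tendsto_0:
  assumes T: "T \<in> measurable M M" and P: "fa_prob M P" and B: "B \<in> sets M" "0 < P B"
    and C: "C \<in> sets M"
  shows "(\<lambda>n. cond_avg M T P B n (T -` C \<inter> space M) - cond_avg M T P B n C) \<longlonglongrightarrow> 0"
proof (rule Lim_null_comparison)
  define a where "a i = P (B \<inter> ((T ^^ i) -` C \<inter> space M))" for i
  have "B \<inter> ((T ^^ i) -` (T -` C \<inter> space M) \<inter> space M) = B \<inter> ((T ^^ Suc i) -` C \<inter> space M)" for i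
    using measurable_space[OF measurable_funpow[OF T]] by (auto simp: funpow_swap1)
  hence "cond_avg M T P B n (T -` C \<inter> space M) - cond_avg M T P B n C =
      ((\<Sum>i<Suc n. a (Suc i)) - (\<Sum>i<Suc n. a i)) / (real (Suc n) * P B)" for n
    using measurable_sets[OF T C] C by (simp add: cond_avg_def a_def diff_divide_distrib)
  also have "(\<Sum>i<Suc n. a (Suc i)) - (\<Sum>i<Suc n. a i) = a (Suc n) - a 0" for n
    by (simp only: sum_subtractf[symmetric] sum_lessThan_telescope)
  finally have diff: "cond_avg M T P B n (T -` C \<inter> space M) - cond_avg M T P B n C =
      (a (Suc n) - a 0) / (real (Suc n) * P B)" for n .
  have "norm (cond_avg M T P B n (T -` C \<inter> space M) - cond_avg M T P B n C)
      \<le> inverse (real (Suc n) * P B)" for n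
  proof -
    have "\<bar>a (Suc n) - a 0\<bar> \<le> 1"
      using fa_prob_nonneg[OF P] fa_prob_le_1[OF P] unfolding a_def abs_le_iff by (smt (verit))
    hence "\<bar>a (Suc n) - a 0\<bar> / (real (Suc n) * P B) \<le> 1 / (real (Suc n) * P B)"
      using B(2) by (intro divide_right_mono) auto
    thus ?thesis using B(2) by (simp add: diff abs_divide inverse_eq_divide)
  qed
  thus "\<forall>\<^sub>F n in sequentially.
      norm (cond_avg M T P B n (T -` C \<inter> space M) - cond_avg M T P B n C) \<le> inverse (real (Suc n) * P B)"
    by simp
  show "(\<lambda>n. inverse (real (Suc n) * P B)) \<longlonglongrightarrow> 0"
    using tendsto_mult_right_zero[OF LIMSEQ_inverse_real_of_nat, of "inverse (P B)"]
    by (simp add: mult.commute)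
qed

lemma cluster_point_cond_avg_inv_probs:
  assumes T: "T \<in> measurable M M" and V: "upper_prob M V" and P: "P \<in> core M V"
    and B: "B \<in> sets M" "0 < P B"
    and x: "x \<in> dominated_fa_probs M V (P B)" "cluster_point (cond_avg M T P B) x"
  shows "x \<in> inv_probs M T"
proof -
  have fa: "fa_prob M P" using P by (simp add: core_def)
  have "x (T -` C \<inter> space M) - x C = 0" if C: "C \<in> sets M" for C
    using cond_avg_vimage_diff_tendsto_0[OF T fa B C]
    by (intro cluster_point_continuous_tendsto[OF _ _ x(2)])
      (auto intro!: continuous_intros)
  thus ?thesis
    using dominated_fa_prob_is_prob[OF V x(1) B(2)] by (simp add: inv_probs_def T_invariant_def)
qed

lemma ergodic_cap_dominated_inv_sets:
  assumes E: "ergodic_cap M T V" and R: "R \<in> dominated_fa_probs M V c" "0 < c"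
    and B: "B \<in> inv_sets M T"
  shows "R B = (if V B = 0 then 0 else 1)"
proof -
  have fa: "fa_prob M R" and dom: "\<And>A. A \<in> sets M \<Longrightarrow> c * R A \<le> V A"
    using R(1) by (auto simp: dominated_fa_probs_def)
  have zero: "R A = 0" if "A \<in> sets M" "V A = 0" for A
    using dom[OF that(1)] fa_prob_nonneg[OF fa, of A] R(2) that(2) by (simp add: mult_le_0_iff)
  have Bs: "B \<in> sets M" using B by (simp add: inv_sets_def)
  show ?thesis
  proof (cases "V B = 0")
    case False
    hence "V (space M - B) = 0" using E B unfolding ergodic_cap_def by blast
    thus ?thesis using zero[of "space M - B"] fa_prob_compl[OF fa Bs] Bs False by auto
  qed (use zero Bs in simp)
qed

lemma cond_avg_tendsto:
  assumes T: "T \<in> measurable M M" and V: "upper_prob M V" "T_invariant M T V"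
    and E: "ergodic_cap M T V" and Q: "Q \<in> core M V \<inter> inv_probs M T"
    and P: "P \<in> core M V" and B: "B \<in> sets M" "0 < P B"
  shows "cond_avg M T P B \<longlonglongrightarrow> Q"
proof (rule compact_unique_cluster_point_tendsto[OF compact_dominated_fa_probs])
  show "cond_avg M T P B n \<in> dominated_fa_probs M V (P B)" for n
    by (rule cond_avg_in_dominated_fa_probs[OF T V(2) P B])
  fix x assume x: "x \<in> dominated_fa_probs M V (P B)" "cluster_point (cond_avg M T P B) x"
  have "Q \<in> dominated_fa_probs M V 1" using Q by (simp add: dominated_fa_probs_1)
  hence "\<And>C. C \<in> inv_sets M T \<Longrightarrow> x C = Q C" "\<And>C. C \<in> inv_sets M T \<Longrightarrow> x C = 0 \<or> x C = 1"
    using ergodic_cap_dominated_inv_sets[OF E x(1) B(2)] ergodic_cap_dominated_inv_sets[OF E, of Q 1]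
    by simp_all
  thus "x = Q"
    using inv_probs_eq_if_agree_on_inv_sets[OF T cluster_point_cond_avg_inv_probs[OF T V(1) P B x]] Q
    by blast
qed

lemma ergodic_cap_imp_mixing_avg:
  assumes T: "T \<in> measurable M M" and V: "upper_prob M V" "T_invariant M T V"
    and E: "ergodic_cap M T V" and Q: "Q \<in> core M V \<inter> inv_probs M T"
  shows "mixing_avg M T V Q"
  unfolding mixing_avg_def
proof (intro ballI)
  fix P B C assume P: "P \<in> core M V" and B: "B \<in> sets M" and C: "C \<in> sets M"
  have fa: "fa_prob M P" using P by (simp add: core_def)
  define u where "u = (\<lambda>n. (\<Sum>i<n. P (B \<inter> ((T ^^ i) -` C \<inter> space M))) / real n)"
  have "u \<longlonglongrightarrow> P B * Q C"
  proof (cases "P B = 0")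
    case True
    hence "P (B \<inter> ((T ^^ i) -` C \<inter> space M)) = 0" for i
      using fa_prob_mono[OF fa Int_funpow_vimage_in_sets[OF T C B] B] fa_prob_nonneg[OF fa]
      by (metis Int_lower1 order_antisym)
    thus ?thesis using True by (simp add: u_def)
  next
    case False
    hence PB: "0 < P B" using fa_prob_nonneg[OF fa, of B] by simp
    have "(\<lambda>n. cond_avg M T P B n C) \<longlonglongrightarrow> Q C"
      using continuous_on_tendsto_compose[OF continuous_on_product_coordinates
          cond_avg_tendsto[OF T V E Q P B PB]] by simp
    hence "(\<lambda>n. P B * cond_avg M T P B n C) \<longlonglongrightarrow> P B * Q C" by (rule tendsto_mult_left)
    moreover have "P B * cond_avg M T P B n C = u (Suc n)" for n
      using C PB by (simp add: cond_avg_def u_def del: sum.lessThan_Suc of_nat_Suc)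
    ultimately have "(\<lambda>n. u (Suc n)) \<longlonglongrightarrow> P B * Q C" by simp
    thus ?thesis by (rule LIMSEQ_imp_Suc)
  qed
  thus "(\<lambda>n. (\<Sum>i<n. P (B \<inter> ((T ^^ i) -` C \<inter> space M))) / real n) \<longlonglongrightarrow> P B * Q C"
    by (simp add: u_def)
qed

lemma ergodic_cap_ex_erg_core:
  assumes T: "T \<in> measurable M M" and V: "upper_prob M V" "T_invariant M T V"
    and E: "ergodic_cap M T V"
  shows "\<exists>Q. Q \<in> core M V \<inter> erg_probs M T"
proof -
  obtain P where P: "P \<in> core M V" "P (space M) = V (space M)"
    using upper_prob_attained[OF V(1) sets.top] by blast
  hence P1: "P (space M) = 1" by (simp add: core_def fa_prob_def)
  have "cond_avg M T P (space M) n \<in> dominated_fa_probs M V 1" for n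
    using cond_avg_in_dominated_fa_probs[OF T V(2) P(1) sets.top] P1 by simp
  then obtain Q where Q: "Q \<in> dominated_fa_probs M V 1" "cluster_point (cond_avg M T P (space M)) Q"
    by (rule compact_obtain_cluster_point[OF compact_dominated_fa_probs])
  have "Q \<in> inv_probs M T"
    using cluster_point_cond_avg_inv_probs[OF T V(1) P(1) sets.top] Q P1 by simp
  moreover have "Q B = 0 \<or> Q B = 1" if "B \<in> inv_sets M T" for B
    using ergodic_cap_dominated_inv_sets[OF E Q(1) _ that] by simp
  ultimately show ?thesis using Q(1) by (auto simp: erg_probs_def dominated_fa_probs_1)
qed

lemma mixing_avg_inv_sets:
  assumes T: "T \<in> measurable M M" and mix: "mixing_avg M T V Q" and P: "P \<in> core M V"
    and B: "B \<in> inv_sets M T" and C: "C \<in> inv_sets M T"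
  shows "P (B \<inter> C) = P B * Q C"
proof -
  have "(\<lambda>n. (\<Sum>i<n. P (B \<inter> ((T ^^ i) -` C \<inter> space M))) / real n) \<longlonglongrightarrow> P B * Q C"
    using mix P B C unfolding mixing_avg_def inv_sets_def by blast
  moreover have "(\<lambda>n. (\<Sum>i<n. P (B \<inter> ((T ^^ i) -` C \<inter> space M))) / real n) =
      (\<lambda>n. real n * P (B \<inter> C) / real n)"
    using funpow_vimage_inv_sets[OF T C] by simp
  moreover have "(\<lambda>n. real n * P (B \<inter> C) / real n) \<longlonglongrightarrow> P (B \<inter> C)"
    by (rule LIMSEQ_offset[of _ 1]) simp
  ultimately show ?thesis using LIMSEQ_unique by metis
qed

lemma mixing_avg_imp_ergodic_cap:
  assumes T: "T \<in> measurable M M" and V: "upper_prob M V"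
    and Q: "Q \<in> core M V" and mix: "mixing_avg M T V Q"
  shows "ergodic_cap M T V"
  unfolding ergodic_cap_def
proof
  fix B assume B: "B \<in> inv_sets M T"
  define B' where "B' = space M - B"
  have B': "B' \<in> inv_sets M T" unfolding B'_def by (rule inv_sets_compl[OF T B])
  have sets: "B \<in> sets M" "B' \<in> sets M" using B B' by (auto simp: inv_sets_def)
  have fa: "fa_prob M P" if "P \<in> core M V" for P using that by (simp add: core_def)
  have disj: "B \<inter> B' = {}" "B' \<inter> B = {}" by (auto simp: B'_def)
  have "Q B = Q B * Q B" using mixing_avg_inv_sets[OF T mix Q B B] by simp
  hence "Q B = 0 \<or> Q B = 1" by (metis mult_cancel_right1 mult_eq_0_iff)
  thus "(V B = 0 \<or> V B = 1) \<and> (V B = 0 \<or> V (space M - B) = 0)"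
  proof
    assume "Q B = 0"
    hence "Q B' = 1" using fa_prob_compl[OF fa[OF Q] sets(1)] by (simp add: B'_def)
    have "P B = 0" if "P \<in> core M V" for P
      using mixing_avg_inv_sets[OF T mix that B B'] disj fa_prob_empty[OF fa[OF that]] \<open>Q B' = 1\<close>
      by simp
    hence "V B = 0" by (metis upper_prob_attained[OF V sets(1)])
    thus ?thesis by simp
  next
    assume "Q B = 1"
    have "P B' = 0" if "P \<in> core M V" for P
      using mixing_avg_inv_sets[OF T mix that B' B] disj fa_prob_empty[OF fa[OF that]] \<open>Q B = 1\<close>
      by simp
    hence "V B' = 0" by (metis upper_prob_attained[OF V sets(2)])
    moreover have "V B = 1"
      using \<open>Q B = 1\<close> Q sets(1) upper_prob_le_1[OF V sets(1)] by (force simp: core_def)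
    ultimately show ?thesis by (simp add: B'_def)
  qed
qed

theorem theorem4p4:
  fixes M :: "'a measure" and T :: "'a \<Rightarrow> 'a" and V :: "'a set \<Rightarrow> real"
  assumes "T \<in> measurable M M"
    and "upper_prob M V"
    and "T_invariant M T V"
  shows "(ergodic_cap M T V \<longleftrightarrow>
            (\<exists>Q\<in>core M V \<inter> erg_probs M T. mixing_avg M T V Q))
       \<and> (ergodic_cap M T V \<longleftrightarrow>
            (\<exists>Q\<in>core M V \<inter> inv_probs M T. mixing_avg M T V Q))"
proof -
  have erg_sub_inv: "erg_probs M T \<subseteq> inv_probs M T" by (auto simp: erg_probs_def)
  have i_ii: "\<exists>Q\<in>core M V \<inter> erg_probs M T. mixing_avg M T V Q" if "ergodic_cap M T V"
    using ergodic_cap_ex_erg_core[OF assms that] ergodic_cap_imp_mixing_avg[OF assms that] erg_sub_inv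
    by blast
  have iii_i: "ergodic_cap M T V" if "\<exists>Q\<in>core M V \<inter> inv_probs M T. mixing_avg M T V Q"
    using that mixing_avg_imp_ergodic_cap[OF assms(1,2)] by blast
  show ?thesis using i_ii iii_i erg_sub_inv by blast
qed

end
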